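(* Let $q\ge 2$, $u\ge 1$, $Q\ge 2$, $n\ge1$, $N\ge 1$ be integers and let $0=\eta_0<\eta_1<\cdots<\eta_Q$ be integer thresholds with $\eta_Q>(q-1)u$ and $q-1\ge\eta_1$. If $\mathbf{C}_b$ is a binary $u$-disjunct matrix of size $n\times N$, then the columns of $(q-1)\mathbf{C}_b$ form a $[q;Q;\boldsymbol{\eta};u]$-SQ-disjunct code of length $n$ and size $N$, where $\boldsymbol{\eta}=(\eta_1,\dots,\eta_Q)$. Consequently, for all $n,N$, if a binary $u$-disjunct code of length $n$ and size $N$ exists, then a $[q;Q;\boldsymbol{\eta};u]$-SQ-disjunct code of length $n$ and size $N$ exists (so the rate $\frac{\log N}{n}$ of the best $[q;Q;\boldsymbol{\eta};u]$-SQ-disjunct code is at least that of the best binary $u$-disjunct code).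
   Context: A binary $n\times N$ matrix is $u$-disjunct if for every column $\mathbf{c}$ and every set $S$ of at most $u$ columns other than $\mathbf{c}$, there is a row in which $\mathbf{c}$ has entry $1$ and every column in $S$ has entry $0$; its columns form a binary $u$-disjunct code of length $n$ and size $N$. A $q$-ary code of length $n$ is a set of distinct vectors in $\{0,1,\dots,q-1\}^n$. For a nonempty set $\mathcal{X}=\{\mathbf{x}_1,\dots,\mathbf{x}_s\}$ of at most $u$ codewords, its syndrome is the vector $\mathbf{y}_{\mathcal{X}}\in\{0,\dots,Q-1\}^n$ whose $k$-th coordinate equals the unique $r\in\{0,\dots,Q-1\}$ with $\eta_r\le\sum_{j=1}^s x_{k,j}<\eta_{r+1}$, where $x_{k,j}$ is the $k$-th coordinate of $\mathbf{x}_j$. We write $\mathcal{X}\lhd\mathcal{Z}$ ($\mathcal{X}$ is included in $\mathcal{Z}$) if $(\mathbf{y}_{\mathcal{X}})_k\le(\mathbf{y}_{\mathcal{Z}})_k$ for all $k$. A code $\mathcal{C}$ is $[q;Q;\boldsymbol{\eta};u]$-SQ-disjunct if for all $1\le s,t\le u$ and all sets $\mathcal{X},\mathcal{Z}\subseteq\mathcal{C}$ with $|\mathcal{X}|=s$, $|\mathcal{Z}|=t$, $\mathcal{X}\lhd\mathcal{Z}$ implies $\mathcal{X}\subseteq\mathcal{Z}$. *)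

theory Defs
  imports Main
begin

text \<open>A binary n x N matrix is represented as a function M :: nat => nat => nat,
  M k j being the entry in row k < n and column j < N.\<close>

definition binary_matrix :: "nat \<Rightarrow> nat \<Rightarrow> (nat \<Rightarrow> nat \<Rightarrow> nat) \<Rightarrow> bool" where
  "binary_matrix n N M \<longleftrightarrow> (\<forall>k<n. \<forall>j<N. M k j \<in> {0, 1})"

definition u_disjunct :: "nat \<Rightarrow> nat \<Rightarrow> nat \<Rightarrow> (nat \<Rightarrow> nat \<Rightarrow> nat) \<Rightarrow> bool" where
  "u_disjunct u n N M \<longleftrightarrow>
     (\<forall>c<N. \<forall>S. S \<subseteq> {..<N} - {c} \<longrightarrow> card S \<le> u \<longrightarrow>
        (\<exists>k<n. M k c = 1 \<and> (\<forall>j\<in>S. M k j = 0)))"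

definition binary_disjunct_code_exists :: "nat \<Rightarrow> nat \<Rightarrow> nat \<Rightarrow> bool" where
  "binary_disjunct_code_exists u n N \<longleftrightarrow> (\<exists>M. binary_matrix n N M \<and> u_disjunct u n N M)"

definition scaled_column :: "nat \<Rightarrow> nat \<Rightarrow> (nat \<Rightarrow> nat \<Rightarrow> nat) \<Rightarrow> nat \<Rightarrow> nat list" where
  "scaled_column c n M j = map (\<lambda>k. c * M k j) [0..<n]"

definition qary_code :: "nat \<Rightarrow> nat \<Rightarrow> nat list set \<Rightarrow> bool" where
  "qary_code q n C \<longleftrightarrow> (\<forall>x\<in>C. length x = n \<and> (\<forall>i<n. x ! i < q))"

definition syndrome :: "nat \<Rightarrow> (nat \<Rightarrow> nat) \<Rightarrow> nat list set \<Rightarrow> nat \<Rightarrow> nat" where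
  "syndrome Q eta X k =
     (THE r. r < Q \<and> eta r \<le> (\<Sum>x\<in>X. x ! k) \<and> (\<Sum>x\<in>X. x ! k) < eta (Suc r))"

definition included :: "nat \<Rightarrow> (nat \<Rightarrow> nat) \<Rightarrow> nat \<Rightarrow> nat list set \<Rightarrow> nat list set \<Rightarrow> bool" where
  "included Q eta n X Z \<longleftrightarrow> (\<forall>k<n. syndrome Q eta X k \<le> syndrome Q eta Z k)"

definition SQ_disjunct :: "nat \<Rightarrow> nat \<Rightarrow> (nat \<Rightarrow> nat) \<Rightarrow> nat \<Rightarrow> nat \<Rightarrow> nat list set \<Rightarrow> bool" where
  "SQ_disjunct q Q eta u n C \<longleftrightarrow> qary_code q n C \<and>
     (\<forall>X Z. X \<subseteq> C \<longrightarrow> Z \<subseteq> C \<longrightarrow> 1 \<le> card X \<longrightarrow> card X \<le> u \<longrightarrow>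
        1 \<le> card Z \<longrightarrow> card Z \<le> u \<longrightarrow> included Q eta n X Z \<longrightarrow> X \<subseteq> Z)"

end

theory Submission
  imports Defs
begin

text \<open>Scaling by c = q - 1 keeps every coordinate sum of at most u codewords within
  {0, ..., c u}, below the top threshold eta Q. If some x \<in> X is not in Z, disjunctness gives
  a row where x has entry c and every member of Z has entry 0. In that row the sum over Z is 0,
  below eta 1, so its syndrome is 0, while the sum over X is at least c \<ge> eta 1, so its
  syndrome is positive; hence X is not included in Z.\<close>

lemma strict_mono_thresholds_le:
  fixes eta :: "nat \<Rightarrow> nat"
  assumes "\<forall>i<Q. eta i < eta (Suc i)" and "i < j" and "j \<le> Q"
  shows "eta (Suc i) \<le> eta j"
  using assms(2,3)
proof (induction j)
  case (Suc j)
  then show ?case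
    using assms(1) by (cases "i = j") (auto intro: order.trans[OF _ less_imp_le])
qed simp

lemma threshold_interval_unique:
  fixes eta :: "nat \<Rightarrow> nat"
  assumes "\<forall>i<Q. eta i < eta (Suc i)"
    and "r < Q" "eta r \<le> s" "s < eta (Suc r)"
    and "r' < Q" "eta r' \<le> s" "s < eta (Suc r')"
  shows "r' = r"
proof (rule ccontr)
  assume "r' \<noteq> r"
  then consider "r' < r" | "r < r'" by linarith
  then show False
    by cases (use strict_mono_thresholds_le[OF assms(1)] assms in \<open>fastforce+\<close>)
qed

lemma threshold_interval_exists:
  fixes eta :: "nat \<Rightarrow> nat"
  assumes "eta 0 = 0" and "s < eta m"
  shows "\<exists>r<m. eta r \<le> s \<and> s < eta (Suc r)"
  using assms(2)
proof (induction m)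
  case (Suc m)
  show ?case
  proof (cases "s < eta m")
    case True
    then show ?thesis
      using Suc.IH less_SucI by blast
  next
    case False
    then show ?thesis
      using Suc.prems by auto
  qed
qed (simp add: assms(1))

lemma syndrome_eqI:
  fixes eta :: "nat \<Rightarrow> nat"
  assumes "\<forall>i<Q. eta i < eta (Suc i)"
    and "r < Q" "eta r \<le> (\<Sum>x\<in>X. x ! k)" "(\<Sum>x\<in>X. x ! k) < eta (Suc r)"
  shows "syndrome Q eta X k = r"
  unfolding syndrome_def
proof (rule the_equality)
  show "r < Q \<and> eta r \<le> (\<Sum>x\<in>X. x ! k) \<and> (\<Sum>x\<in>X. x ! k) < eta (Suc r)"
    using assms(2-4) by blast
qed (use threshold_interval_unique[OF assms] in blast)

lemma syndrome_eq_0: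
  fixes eta :: "nat \<Rightarrow> nat"
  assumes "\<forall>i<Q. eta i < eta (Suc i)" and "eta 0 = 0" and "0 < Q"
    and "(\<Sum>x\<in>X. x ! k) < eta 1"
  shows "syndrome Q eta X k = 0"
  using syndrome_eqI[OF assms(1,3)] assms(2,4) by simp

lemma syndrome_pos:
  fixes eta :: "nat \<Rightarrow> nat"
  assumes "\<forall>i<Q. eta i < eta (Suc i)" and "eta 0 = 0"
    and "eta 1 \<le> (\<Sum>x\<in>X. x ! k)" and "(\<Sum>x\<in>X. x ! k) < eta Q"
  shows "0 < syndrome Q eta X k"
proof -
  obtain r where "r < Q" "eta r \<le> (\<Sum>x\<in>X. x ! k)" "(\<Sum>x\<in>X. x ! k) < eta (Suc r)"
    using threshold_interval_exists[OF assms(2,4)] by blast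
  moreover from this have "r \<noteq> 0"
    using assms(3) by (cases r) auto
  ultimately show ?thesis
    using syndrome_eqI[OF assms(1)] by simp
qed

lemma length_scaled_column [simp]: "length (scaled_column c n M j) = n"
  by (simp add: scaled_column_def)

lemma nth_scaled_column [simp]: "k < n \<Longrightarrow> scaled_column c n M j ! k = c * M k j"
  by (simp add: scaled_column_def)

lemma u_disjunct_separating_row:
  assumes "u_disjunct u n N M" and "c < N" and "S \<subseteq> {..<N} - {c}" and "card S \<le> u"
  obtains k where "k < n" "M k c = 1" "\<And>j. j \<in> S \<Longrightarrow> M k j = 0"
proof -
  have "\<exists>k<n. M k c = 1 \<and> (\<forall>j\<in>S. M k j = 0)"
    using assms unfolding u_disjunct_def by simp
  then show ?thesis
    using that by blast
qed

lemma inj_on_scaled_column: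
  assumes "u_disjunct u n N M" and "1 \<le> u" and "0 < c"
  shows "inj_on (scaled_column c n M) {..<N}"
proof (rule inj_onI, rule ccontr)
  fix a b
  assume ab: "a \<in> {..<N}" "b \<in> {..<N}" "scaled_column c n M a = scaled_column c n M b" "a \<noteq> b"
  then obtain k where "k < n" "M k a = 1" "M k b = 0"
    using u_disjunct_separating_row[OF assms(1), of a "{b}"] assms(2) by auto
  moreover have "scaled_column c n M a ! k = scaled_column c n M b ! k"
    using ab(3) by simp
  ultimately show False
    using assms(3) by simp
qed

lemma binary_matrix_scaled_entry_le:
  assumes "binary_matrix n N M" and "k < n" and "j < N"
  shows "c * M k j \<le> c"
proof -
  have "M k j = 0 \<or> M k j = 1"
    using assms unfolding binary_matrix_def by simp
  then show ?thesis
    by auto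
qed

lemma qary_code_scaled_columns:
  assumes "binary_matrix n N M" and "c < q"
  shows "qary_code q n (scaled_column c n M ` {..<N})"
  unfolding qary_code_def
proof (intro ballI conjI allI impI)
  fix x i
  assume "x \<in> scaled_column c n M ` {..<N}" and "i < n"
  then obtain j where "j < N" "x = scaled_column c n M j"
    by blast
  then have "x ! i \<le> c"
    using binary_matrix_scaled_entry_le[OF assms(1) \<open>i < n\<close>] \<open>i < n\<close> by simp
  then show "x ! i < q"
    using assms(2) by simp
qed auto

lemma sum_scaled_columns_le:
  assumes "binary_matrix n N M" and "X \<subseteq> scaled_column c n M ` {..<N}" and "k < n"
  shows "(\<Sum>x\<in>X. x ! k) \<le> card X * c"
proof -
  have "x ! k \<le> c" if "x \<in> X" for x
  proof -
    obtain j where "j < N" "x = scaled_column c n M j"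
      using assms(2) \<open>x \<in> X\<close> by auto
    then show ?thesis
      using binary_matrix_scaled_entry_le[OF assms(1,3)] assms(3) by simp
  qed
  then show ?thesis
    using sum_bounded_above[of X "\<lambda>x. x ! k" c] by simp
qed

lemma scaled_columns_separating_row:
  assumes "u_disjunct u n N M" and "inj_on (scaled_column c n M) {..<N}"
    and "Z \<subseteq> scaled_column c n M ` {..<N}" and "card Z \<le> u"
    and "j < N" and "scaled_column c n M j \<notin> Z"
  obtains k where "k < n" "scaled_column c n M j ! k = c" "(\<Sum>z\<in>Z. z ! k) = 0"
proof -
  let ?f = "scaled_column c n M"
  define S where "S = {i \<in> {..<N}. ?f i \<in> Z}"
  have Z_eq: "Z = ?f ` S"
    using assms(3) unfolding S_def by auto
  have inj_S: "inj_on ?f S"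
    by (rule inj_on_subset[OF assms(2)]) (auto simp: S_def)
  have "card S \<le> u"
    using assms(4) unfolding Z_eq card_image[OF inj_S] .
  moreover have "S \<subseteq> {..<N} - {j}"
    using assms(6) unfolding S_def by auto
  ultimately obtain k where k: "k < n" "M k j = 1" "\<And>i. i \<in> S \<Longrightarrow> M k i = 0"
    using u_disjunct_separating_row[OF assms(1,5)] by metis
  have "(\<Sum>z\<in>Z. z ! k) = 0"
    unfolding Z_eq sum.reindex[OF inj_S] using k by (simp add: S_def)
  then show ?thesis
    using that k by simp
qed

lemma SQ_disjunct_scaled_columns:
  fixes eta :: "nat \<Rightarrow> nat"
  assumes eta: "\<forall>i<Q. eta i < eta (Suc i)" "eta 0 = 0" "0 < Q"
    and c: "c < q" "eta 1 \<le> c" "c * u < eta Q"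
    and "1 \<le> u" and M: "binary_matrix n N M" "u_disjunct u n N M"
  shows "card (scaled_column c n M ` {..<N}) = N \<and> SQ_disjunct q Q eta u n (scaled_column c n M ` {..<N})"
proof -
  let ?f = "scaled_column c n M"
  have "0 < eta 1"
    using eta by (metis One_nat_def)
  then have inj: "inj_on ?f {..<N}"
    using inj_on_scaled_column[OF M(2) \<open>1 \<le> u\<close>] c(2) by simp
  have "x \<in> Z"
    if X: "X \<subseteq> ?f ` {..<N}" "1 \<le> card X" "card X \<le> u"
      and Z: "Z \<subseteq> ?f ` {..<N}" "card Z \<le> u"
      and incl: "included Q eta n X Z" and "x \<in> X" for X Z x
  proof (rule ccontr)
    assume "x \<notin> Z"
    obtain j where j: "j < N" "x = ?f j"
      using \<open>x \<in> X\<close> X(1) by auto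
    then obtain k where k: "k < n" "x ! k = c" "(\<Sum>z\<in>Z. z ! k) = 0"
      using scaled_columns_separating_row[OF M(2) inj Z] \<open>x \<notin> Z\<close> by metis
    then have "syndrome Q eta Z k = 0"
      using syndrome_eq_0[OF eta] \<open>0 < eta 1\<close> by simp
    moreover have "0 < syndrome Q eta X k"
    proof (rule syndrome_pos[OF eta(1,2)])
      have "finite X"
        using X(2) by (metis card.infinite not_one_le_zero)
      then have "x ! k \<le> (\<Sum>y\<in>X. y ! k)"
        using \<open>x \<in> X\<close> by (intro member_le_sum) simp_all
      then show "eta 1 \<le> (\<Sum>y\<in>X. y ! k)"
        using k(2) c(2) by simp
      have "(\<Sum>y\<in>X. y ! k) \<le> card X * c"
        by (rule sum_scaled_columns_le[OF M(1) X(1) k(1)])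
      also have "\<dots> \<le> c * u"
        using X(3) by (simp add: mult.commute)
      finally show "(\<Sum>y\<in>X. y ! k) < eta Q"
        using c(3) by linarith
    qed
    ultimately show False
      using incl k(1) unfolding included_def by (metis not_le)
  qed
  then show ?thesis
    unfolding SQ_disjunct_def
    using card_image[OF inj] qary_code_scaled_columns[OF M(1) c(1)] by (auto 4 3)
qed

theorem proposition2:
  fixes q u Q :: nat and eta :: "nat \<Rightarrow> nat"
  assumes "q \<ge> 2" and "u \<ge> 1" and "Q \<ge> 2"
    and "eta 0 = 0" and "\<forall>i<Q. eta i < eta (Suc i)"
    and "eta Q > (q - 1) * u" and "q - 1 \<ge> eta 1"
  shows "(\<forall>n N M. n \<ge> 1 \<longrightarrow> N \<ge> 1 \<longrightarrow> binary_matrix n N M \<longrightarrow> u_disjunct u n N M \<longrightarrow>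
            (let C = scaled_column (q - 1) n M ` {..<N} in
              card C = N \<and> SQ_disjunct q Q eta u n C))
       \<and> (\<forall>n N. n \<ge> 1 \<longrightarrow> N \<ge> 1 \<longrightarrow> binary_disjunct_code_exists u n N \<longrightarrow>
            (\<exists>C. card C = N \<and> SQ_disjunct q Q eta u n C))"
proof -
  have scaled: "card (scaled_column (q - 1) n M ` {..<N}) = N
      \<and> SQ_disjunct q Q eta u n (scaled_column (q - 1) n M ` {..<N})"
    if "binary_matrix n N M" "u_disjunct u n N M" for n N M
  proof -
    have "0 < Q" "q - 1 < q" "(q - 1) * u < eta Q"
      using assms(1,3,6) by simp_all
    then show ?thesis
      using SQ_disjunct_scaled_columns[OF assms(5,4) _ _ assms(7) _ assms(2) that] by blast
  qed
  show ?thesis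
    unfolding binary_disjunct_code_exists_def Let_def
    using scaled by blast
qed

end
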